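(* Let $B$ be a norming region and $x\in S$. Let $(X_n)_{n\ge0}$ be a Markov chain with law $P_h^x$, regarded as the quasi-path $[w]$ with $w_n=X_n$ for $n\ge0$ and $w_n=\partial$ for $n<0$. Then the random coloured tree obtained by applying the $B$-biased decoration kernel $\bar\Gamma^{\mathrm{deco}}$ to it has law $\bar{\mathbb P}^{(x,\mathrm{blue})}_B$. In particular, $P_h^x$-almost every path enters $B$.
   Context: $S$ countable, $p=(p_{x,y})$ stochastic on $S$, $(d_x)_{x\in S}$ offspring distributions on $\mathbb N_0$, $m_x=\sum_m m\,d_x(m)$, $q_{x,y}=m_xp_{x,y}$, $Q=(q_{x,y})$, Green's function $g=\sum_{n\ge0}Q^n$ assumed finite entrywise. In a branching Markov chain (BMC$(d,p)$: each individual at $z$ independently has a $d_z$-distributed number of children at independent $p(z,\cdot)$-distributed locations; individuals carry independent uniform labels in $[0,1]$ and a pointer to their parent's label), $\mathcal H_B$ is the set of individuals located in $B$ with no strict ancestor located in $B$. A norming region is a finite $B\subset S$ with $\sum_{y\in B}g(x,y)>0$ for all $x$; $h(x)=\mathbb E^x[\#\mathcal H_B]\in(0,\infty)$. $P_h^x$: law of the Markov chain started at $x$ with substochastic transition matrix $p^h_{x,y}=\mathbf 1_{B^c}(x)q_{x,y}h(y)/h(x)$, sent to an absorbing cemetery $\partial\notin S$ with the missing mass. $d^{\mathrm{s.b.}}_x(n)=n\,d_x(n)/m_x$. Quasi-paths: $\bar S=S\cup\{\partial\}$; a path $w\in\bar S^{\mathbb Z}$ with $w_n\in S$ exactly for $t_\partial\le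 n<t^\partial$ ($t_\partial<t^\partial$ in $\mathbb Z\cup\{\pm\infty\}$) and $w_n\to\partial$ as $n\to-\infty$; $[w]$ its class modulo time shifts. $B$-biased decoration $\bar\Gamma^{\mathrm{deco}}([w],\cdot)$: (1) for each $k\in\mathbb Z\cap[t_\partial,t^\partial)$ create a blue individual with independent uniform label $i_k$ located at $w_k$, with predecessor $i_{k-1}$ (no predecessor if $k=t_\partial$); (2) to each such spine individual at $x\notin B$ attach independently, with probability $d^{\mathrm{s.b.}}_x(n)$, $n-1$ white children at independent $p(x,\cdot)$-locations with uniform labels, each the root of an independent white BMC$(d,p)$; (3) each spine individual at $x\in B$ is the root of an independent white BMC$(d,p)$. $B$-biased BMC: two-type BMC with types white/blue; white individuals and blue individuals in $B$ reproduce as in BMC$(d,p)$ with white children; a blue individual at $x\notin B$ has $n$ children with ordered locations $y_1,\dots,y_n$ with probability $\frac1{h(x)}d_x(n)\prod_kp_{x,y_k}\sum_kh(y_k)$, and then the $k$-th is coloured blue with probability $h(y_k)/\sum_lh(y_l)$, the others white. $\bar{\mathbb P}^{(x,\mathrm{blue})}_B$ is its law started from a single blue individual at $x$ (children receiving independent uniform labels). *)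

theory Defs
  imports "HOL-Probability.Probability" "HOL-Library.Multiset"
begin

datatype colour = White | Blue

text \<open>Finite rooted unordered trees whose vertices carry a mark (location, colour).
  An individual with uniform labels in [0,1] and parent pointers is identified with
  such an unordered tree (the labels are i.i.d. and independent of everything, so the
  law of the labelled tree is determined by the law of its isomorphism class).\<close>
datatype 'a utree = UNode 'a "'a utree multiset"

fun seq_pmf :: "'b pmf list \<Rightarrow> 'b list pmf" where
  "seq_pmf [] = return_pmf []"
| "seq_pmf (M # Ms) = bind_pmf M (\<lambda>a. map_pmf (Cons a) (seq_pmf Ms))"

definition mean_off :: "('a \<Rightarrow> nat pmf) \<Rightarrow> 'a \<Rightarrow> ennreal" where
  "mean_off d x = (\<integral>\<^sup>+ k. ennreal (real k) \<partial>measure_pmf (d x))"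

definition qmat :: "('a \<Rightarrow> nat pmf) \<Rightarrow> ('a \<Rightarrow> 'a pmf) \<Rightarrow> 'a \<Rightarrow> 'a \<Rightarrow> ennreal" where
  "qmat d p x y = mean_off d x * ennreal (pmf (p x) y)"

primrec qpow :: "('a \<Rightarrow> nat pmf) \<Rightarrow> ('a \<Rightarrow> 'a pmf) \<Rightarrow> nat \<Rightarrow> 'a \<Rightarrow> 'a \<Rightarrow> ennreal" where
  "qpow d p 0 x y = (if x = y then 1 else 0)"
| "qpow d p (Suc n) x y = (\<Sum>\<^sub>\<infinity>z. qpow d p n x z * qmat d p z y)"

definition green :: "('a \<Rightarrow> nat pmf) \<Rightarrow> ('a \<Rightarrow> 'a pmf) \<Rightarrow> 'a \<Rightarrow> 'a \<Rightarrow> ennreal" where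
  "green d p x y = (\<Sum>n. qpow d p n x y)"

definition norming_region :: "('a \<Rightarrow> nat pmf) \<Rightarrow> ('a \<Rightarrow> 'a pmf) \<Rightarrow> 'a set \<Rightarrow> bool" where
  "norming_region d p B \<longleftrightarrow> finite B \<and> (\<forall>x. (\<Sum>y\<in>B. green d p x y) > 0)"

definition white_kids :: "('a \<Rightarrow> nat pmf) \<Rightarrow> ('a \<Rightarrow> 'a pmf) \<Rightarrow> ('a \<Rightarrow> 't pmf) \<Rightarrow> 'a \<Rightarrow> 't multiset pmf" where
  "white_kids d p f z =
     bind_pmf (d z) (\<lambda>k. bind_pmf (seq_pmf (replicate k (p z)))
       (\<lambda>ys. map_pmf mset (seq_pmf (map f ys))))"

primrec bmc :: "('a \<Rightarrow> nat pmf) \<Rightarrow> ('a \<Rightarrow> 'a pmf) \<Rightarrow> nat \<Rightarrow> 'a \<Rightarrow> ('a \<times> colour) utree pmf" where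
  "bmc d p 0 = (\<lambda>z. return_pmf (UNode (z, White) {#}))"
| "bmc d p (Suc n) = (\<lambda>z. map_pmf (UNode (z, White)) (white_kids d p (bmc d p n) z))"

primrec hcount :: "'a set \<Rightarrow> ('a \<times> colour) utree \<Rightarrow> nat" where
  "hcount B (UNode a M) = (if fst a \<in> B then 1 else sum_mset (image_mset (hcount B) M))"

text \<open>h(x) = E^x[#H_B]; by monotone convergence this is the limit (sup) of the
  expected counts within the depth-n truncations.\<close>
definition hfun :: "('a \<Rightarrow> nat pmf) \<Rightarrow> ('a \<Rightarrow> 'a pmf) \<Rightarrow> 'a set \<Rightarrow> 'a \<Rightarrow> ennreal" where
  "hfun d p B x = (SUP n. \<integral>\<^sup>+ t. ennreal (real (hcount B t)) \<partial>measure_pmf (bmc d p n x))"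

definition ph :: "('a \<Rightarrow> nat pmf) \<Rightarrow> ('a \<Rightarrow> 'a pmf) \<Rightarrow> 'a set \<Rightarrow> 'a \<Rightarrow> 'a \<Rightarrow> ennreal" where
  "ph d p B x y = (if x \<in> B then 0 else qmat d p x y * hfun d p B y / hfun d p B x)"

text \<open>Transition kernel on S + cemetery (None = \<partial>), the missing mass going to \<partial>,
  which is absorbing.\<close>
definition hkernel :: "('a \<Rightarrow> nat pmf) \<Rightarrow> ('a \<Rightarrow> 'a pmf) \<Rightarrow> 'a set \<Rightarrow> 'a option \<Rightarrow> 'a option pmf" where
  "hkernel d p B s = (case s of
      None \<Rightarrow> return_pmf None
    | Some x \<Rightarrow> embed_pmf (\<lambda>s'. case s' of
          Some y \<Rightarrow> enn2real (ph d p B x y)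
        | None \<Rightarrow> enn2real (1 - (\<Sum>\<^sub>\<infinity>y. ph d p B x y))))"

text \<open>Law of (w_1, ..., w_n) of the chain started at w_0 = o.\<close>
primrec hpath :: "('a \<Rightarrow> nat pmf) \<Rightarrow> ('a \<Rightarrow> 'a pmf) \<Rightarrow> 'a set \<Rightarrow> nat \<Rightarrow> 'a option \<Rightarrow> 'a option list pmf" where
  "hpath d p B 0 = (\<lambda>s. return_pmf [])"
| "hpath d p B (Suc n) = (\<lambda>s. bind_pmf (hkernel d p B s) (\<lambda>s'. map_pmf (Cons s') (hpath d p B n s')))"

definition dsb :: "('a \<Rightarrow> nat pmf) \<Rightarrow> 'a \<Rightarrow> nat pmf" where
  "dsb d x = embed_pmf (\<lambda>k. real k * pmf (d x) k / enn2real (mean_off d x))"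

text \<open>deco d p B n z ws: depth-n truncation of the decoration of the spine
  z = w_0, ws = [w_1, ..., w_n] (None = \<partial>).\<close>
primrec deco :: "('a \<Rightarrow> nat pmf) \<Rightarrow> ('a \<Rightarrow> 'a pmf) \<Rightarrow> 'a set \<Rightarrow> nat \<Rightarrow> 'a \<Rightarrow> 'a option list
                   \<Rightarrow> ('a \<times> colour) utree pmf" where
  "deco d p B 0 = (\<lambda>z ws. return_pmf (UNode (z, Blue) {#}))"
| "deco d p B (Suc n) = (\<lambda>z ws.
     bind_pmf (case ws of Some z' # ws' \<Rightarrow> map_pmf (\<lambda>t. {#t#}) (deco d p B n z' ws')
                         | _ \<Rightarrow> return_pmf {#})
       (\<lambda>spine.
        if z \<in> B then map_pmf (\<lambda>M. UNode (z, Blue) (M + spine)) (white_kids d p (bmc d p n) z)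
        else bind_pmf (dsb d z) (\<lambda>k. bind_pmf (seq_pmf (replicate (k - 1) (p z)))
               (\<lambda>ys. map_pmf (\<lambda>ts. UNode (z, Blue) (mset ts + spine)) (seq_pmf (map (bmc d p n) ys))))))"

text \<open>Offspring of a blue individual at x outside B: ordered locations ys and the
  index k of the blue child.\<close>
definition biased_off :: "('a \<Rightarrow> nat pmf) \<Rightarrow> ('a \<Rightarrow> 'a pmf) \<Rightarrow> 'a set \<Rightarrow> 'a \<Rightarrow> ('a list \<times> nat) pmf" where
  "biased_off d p B x = embed_pmf (\<lambda>(ys, k).
     (let h = (\<lambda>y. enn2real (hfun d p B y)); S = sum_list (map h ys) in
      if k < length ys then
        (1 / h x) * pmf (d x) (length ys) * prod_list (map (pmf (p x)) ys) * S * (h (ys ! k) / S)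
      else 0))"

primrec bbmc :: "('a \<Rightarrow> nat pmf) \<Rightarrow> ('a \<Rightarrow> 'a pmf) \<Rightarrow> 'a set \<Rightarrow> nat \<Rightarrow> 'a \<Rightarrow> ('a \<times> colour) utree pmf" where
  "bbmc d p B 0 = (\<lambda>z. return_pmf (UNode (z, Blue) {#}))"
| "bbmc d p B (Suc n) = (\<lambda>z.
     if z \<in> B then map_pmf (UNode (z, Blue)) (white_kids d p (bmc d p n) z)
     else bind_pmf (biased_off d p B z) (\<lambda>(ys, k).
        map_pmf (\<lambda>ts. UNode (z, Blue) (mset ts))
          (seq_pmf (map (\<lambda>i. if i = k then bbmc d p B n (ys ! i) else bmc d p n (ys ! i))
                        [0..<length ys]))))"

end

theory Submission
  imports Defs
begin

text \<open>Splitting the BMC at its first generation shows that h equals 1 on B and is Q-harmonic off B;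
  it is finite because it is dominated by the Green function, and positive because B is norming.
  Hence p^h is stochastic off B, and the P_h-probability of having hit B by time n equals the mean
  number of first visits to B within depth n divided by h(x), which increases to 1.
  The decoration identity is proved by induction on the depth. Its only non-trivial ingredient is
  that, under the biased offspring law, the blue child is p^h-distributed and, independently, its
  white siblings form a size-biased family with one member removed: exactly the way the decoration
  grows the tree around the spine.\<close>

section \<open>Discrete integrals and independent draws\<close>

lemma infsum_ennreal_eq_nn_integral:
  fixes f :: "'a::countable \<Rightarrow> ennreal"
  shows "infsum f UNIV = (\<integral>\<^sup>+x. f x \<partial>count_space UNIV)"
proof -
  have infsum_SUP: "infsum f UNIV = (SUP F\<in>{F. finite F \<and> F \<subseteq> UNIV}. sum f F)"
    by (rule nonneg_infsum_complete) simp
  have sum_eq: "sum f F = (\<integral>\<^sup>+x. f x * indicator F x \<partial>count_space UNIV)" if "finite F" for F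
    using that by (simp add: nn_integral_count_space_indicator[symmetric] nn_integral_count_space_finite)
  define F :: "nat \<Rightarrow> 'a set" where "F n = to_nat -` {..<n}" for n
  have finite_F: "finite (F n)" for n
    unfolding F_def by (rule finite_vimageI) auto
  have exhaust: "f x = (SUP n. f x * indicator (F n) x)" for x
    by (intro antisym SUP_upper2[where i="Suc (to_nat x)"] SUP_least)
       (auto simp: F_def split: split_indicator)
  have "incseq (\<lambda>n x. f x * indicator (F n) x)"
    by (auto simp: incseq_def le_fun_def F_def split: split_indicator)
  then have integral_SUP: "(\<integral>\<^sup>+x. f x \<partial>count_space UNIV) = (SUP n. sum f (F n))"
    by (subst exhaust) (simp add: nn_integral_monotone_convergence_SUP sum_eq[OF finite_F])
  have "sum f G \<le> (\<integral>\<^sup>+x. f x \<partial>count_space UNIV)" if "finite G" for G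
    unfolding sum_eq[OF that] by (intro nn_integral_mono) (simp split: split_indicator)
  then have "infsum f UNIV \<le> (\<integral>\<^sup>+x. f x \<partial>count_space UNIV)"
    unfolding infsum_SUP by (intro SUP_least) auto
  moreover have "(\<integral>\<^sup>+x. f x \<partial>count_space UNIV) \<le> infsum f UNIV"
    unfolding integral_SUP infsum_SUP using finite_F by (intro SUP_mono) auto
  ultimately show ?thesis by (rule antisym)
qed

lemma nn_integral_count_space_prod:
  fixes f :: "'a::countable \<times> 'b::countable \<Rightarrow> ennreal"
  shows "(\<integral>\<^sup>+x. f x \<partial>count_space UNIV) = (\<integral>\<^sup>+a. \<integral>\<^sup>+b. f (a, b) \<partial>count_space UNIV \<partial>count_space UNIV)"
proof -
  interpret sigma_finite_measure "count_space (UNIV :: 'b set)"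
    by (rule sigma_finite_measure_count_space_countable) simp
  show ?thesis
    by (subst nn_integral_fst) (simp_all add: pair_measure_countable)
qed

lemma nn_integral_count_space_if_eq:
  fixes c :: "'a \<Rightarrow> ennreal"
  shows "(\<integral>\<^sup>+z. (if z = x then c z else 0) \<partial>count_space UNIV) = c x"
    and "(\<integral>\<^sup>+z. (if x = z then c z else 0) \<partial>count_space UNIV) = c x"
  by (subst nn_integral_count_space'[of "{x}"]; auto)+

lemma prod_list_pmf_nonneg [simp]: "0 \<le> (\<Prod>x\<leftarrow>xs. pmf M x)"
  by (rule prod_list_nonneg) auto

lemma nn_integral_seq_pmf_sum_list:
  "(\<integral>\<^sup>+ts. sum_list (map G ts) \<partial>seq_pmf Ms) = (\<Sum>M\<leftarrow>Ms. \<integral>\<^sup>+t. G t \<partial>measure_pmf M)"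
  for G :: "'b \<Rightarrow> ennreal"
proof (induction Ms)
  case (Cons M Ms)
  have "(\<integral>\<^sup>+ts. sum_list (map G ts) \<partial>seq_pmf (M # Ms))
      = (\<integral>\<^sup>+a. G a + (\<integral>\<^sup>+ts. sum_list (map G ts) \<partial>seq_pmf Ms) \<partial>M)"
    by (simp add: nn_integral_add measure_pmf.emeasure_space_1)
  then show ?case
    using Cons by (simp add: nn_integral_add measure_pmf.emeasure_space_1)
qed simp

lemma pmf_seq_pmf_replicate:
  "pmf (seq_pmf (replicate k P)) ws = (if length ws = k then (\<Prod>w\<leftarrow>ws. pmf P w) else 0)"
proof (induction k arbitrary: ws)
  case (Suc k)
  have seq_Suc: "seq_pmf (replicate (Suc k) P)
      = map_pmf (\<lambda>(a, l). a # l) (pair_pmf P (seq_pmf (replicate k P)))"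
    by (simp add: pair_pmf_def map_bind_pmf map_pmf_def bind_assoc_pmf bind_return_pmf)
  have inj_Cons: "inj (\<lambda>(a :: 'a, l). a # l)"
    by (auto simp: inj_on_def)
  show ?case
  proof (cases ws)
    case Nil
    then show ?thesis
      unfolding seq_Suc by (auto intro!: pmf_map_outside)
  next
    case (Cons w ws')
    then show ?thesis
      unfolding seq_Suc using Suc.IH pmf_map_inj'[OF inj_Cons, of _ "(w, ws')"] by (simp add: pmf_pair)
  qed
qed (simp add: indicator_def)

lemma map_pmf_mset_seq_pmf_append_Cons:
  "map_pmf mset (seq_pmf (Ms1 @ M # Ms2))
     = bind_pmf M (\<lambda>t. map_pmf (\<lambda>ts. mset ts + {#t#}) (seq_pmf (Ms1 @ Ms2)))"
proof (induction Ms1)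
  case Nil
  then show ?case by (simp add: map_bind_pmf pmf.map_comp o_def)
next
  case (Cons M' Ms1)
  have "map_pmf mset (seq_pmf ((M' # Ms1) @ M # Ms2))
      = bind_pmf M' (\<lambda>a. map_pmf (add_mset a) (map_pmf mset (seq_pmf (Ms1 @ M # Ms2))))"
    by (simp add: map_bind_pmf pmf.map_comp o_def)
  also have "\<dots> = bind_pmf M' (\<lambda>a. bind_pmf M (\<lambda>t. map_pmf (add_mset a)
          (map_pmf (\<lambda>ts. mset ts + {#t#}) (seq_pmf (Ms1 @ Ms2)))))"
    by (simp add: Cons.IH map_bind_pmf)
  also have "\<dots> = bind_pmf M (\<lambda>t. bind_pmf M' (\<lambda>a. map_pmf (add_mset a)
          (map_pmf (\<lambda>ts. mset ts + {#t#}) (seq_pmf (Ms1 @ Ms2)))))"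
    by (rule bind_commute_pmf)
  finally show ?case
    by (simp add: map_bind_pmf pmf.map_comp o_def add_mset_commute)
qed

lemma nn_integral_count_space_option:
  fixes g :: "'b option \<Rightarrow> ennreal"
  shows "(\<integral>\<^sup>+s. g s \<partial>count_space UNIV) = g None + (\<integral>\<^sup>+y. g (Some y) \<partial>count_space UNIV)"
proof -
  have "(\<integral>\<^sup>+s. g s \<partial>count_space UNIV)
      = (\<integral>\<^sup>+s. g None * indicator {None} s + g s * indicator (range Some) s \<partial>count_space UNIV)"
    by (intro nn_integral_cong) (auto split: split_indicator option.splits)
  also have "\<dots> = g None + (\<integral>\<^sup>+s. g s \<partial>count_space (range Some))"
    by (subst nn_integral_add) (auto simp: nn_integral_cmult_indicator nn_integral_count_space_indicator)
  also have "(\<integral>\<^sup>+s. g s \<partial>count_space (range Some)) = (\<integral>\<^sup>+y. g (Some y) \<partial>count_space UNIV)"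
    by (rule nn_integral_bij_count_space[symmetric]) (simp add: inj_on_imp_bij_betw)
  finally show ?thesis .
qed

lemma ennreal_mult_divide_mult_divide_cancel:
  fixes a b c e :: ennreal
  assumes "0 < c" "c < \<top>"
  shows "a * c / b * (e / c) = a * e / b"
proof -
  have "c * inverse c = 1"
    using assms ennreal_divide_self[of c] by (simp add: divide_ennreal_def)
  have "a * c * inverse b * (e * inverse c) = a * e * inverse b * (c * inverse c)"
    by (simp add: ac_simps)
  with \<open>c * inverse c = 1\<close> show ?thesis
    by (simp add: divide_ennreal_def)
qed

lemma ennreal_mult_divide:
  fixes a b c :: real
  assumes "0 \<le> a" "0 \<le> b" "0 < c"
  shows "ennreal (a * b / c) = ennreal a * ennreal b / ennreal c"
  using assms by (metis divide_ennreal ennreal_mult mult_nonneg_nonneg)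

definition remove_at :: "nat \<Rightarrow> 'a list \<Rightarrow> 'a list" where
  "remove_at k ys = take k ys @ drop (Suc k) ys"

definition insert_at :: "nat \<Rightarrow> 'a \<Rightarrow> 'a list \<Rightarrow> 'a list" where
  "insert_at k y ws = take k ws @ y # drop k ws"

lemma length_insert_at: "k \<le> length ws \<Longrightarrow> length (insert_at k y ws) = Suc (length ws)"
  by (simp add: insert_at_def)

lemma nth_remove_at_eq_iff:
  assumes "k < length ys"
  shows "(ys ! k = y \<and> remove_at k ys = ws) \<longleftrightarrow> (k \<le> length ws \<and> ys = insert_at k y ws)"
  using assms id_take_nth_drop[OF assms]
  by (auto simp: remove_at_def insert_at_def nth_append min_def)

lemma prod_list_insert_at: "(\<Prod>x\<leftarrow>insert_at k y ws. f x) = f y * (\<Prod>x\<leftarrow>ws. f x)"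
  for f :: "'a \<Rightarrow> 'b::comm_monoid_mult"
proof -
  have "(\<Prod>x\<leftarrow>ws. f x) = (\<Prod>x\<leftarrow>take k ws. f x) * (\<Prod>x\<leftarrow>drop k ws. f x)"
    by (metis append_take_drop_id map_append prod_list.append)
  then show ?thesis
    by (simp add: insert_at_def ac_simps)
qed

lemma map_upt_if_eq:
  assumes "k < length ys"
  shows "map (\<lambda>i. if i = k then A (ys ! i) else C (ys ! i)) [0..<length ys]
       = map C (take k ys) @ A (ys ! k) # map C (drop (Suc k) ys)"
proof (rule nth_equalityI)
  fix i
  assume "i < length (map (\<lambda>i. if i = k then A (ys ! i) else C (ys ! i)) [0..<length ys])"
  then show "map (\<lambda>i. if i = k then A (ys ! i) else C (ys ! i)) [0..<length ys] ! i
      = (map C (take k ys) @ A (ys ! k) # map C (drop (Suc k) ys)) ! i"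
    using assms by (cases "i < k"; cases "i = k") (auto simp: nth_append nth_Cons' Suc_diff_Suc)
qed (use assms in simp)

lemma map_pmf_mset_seq_pmf_if_nth:
  assumes "k < length ys"
  shows "map_pmf mset (seq_pmf (map (\<lambda>i. if i = k then A (ys ! i) else C (ys ! i)) [0..<length ys]))
       = bind_pmf (A (ys ! k)) (\<lambda>t. map_pmf (\<lambda>ts. mset ts + {#t#}) (seq_pmf (map C (remove_at k ys))))"
  by (simp add: map_upt_if_eq[OF assms] map_pmf_mset_seq_pmf_append_Cons remove_at_def)

section \<open>First-generation decomposition and the harmonic function h\<close>

definition offspring_locs :: "('a \<Rightarrow> nat pmf) \<Rightarrow> ('a \<Rightarrow> 'a pmf) \<Rightarrow> 'a \<Rightarrow> 'a list pmf" where
  "offspring_locs d p z = bind_pmf (d z) (\<lambda>k. seq_pmf (replicate k (p z)))"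

lemma ennreal_pmf_offspring_locs:
  "ennreal (pmf (offspring_locs d p z) ys) = ennreal (pmf (d z) (length ys)) * ennreal (\<Prod>y\<leftarrow>ys. pmf (p z) y)"
  by (simp add: offspring_locs_def ennreal_pmf_bind pmf_seq_pmf_replicate nn_integral_measure_pmf
      if_distrib[of "\<lambda>a. _ * ennreal a"] nn_integral_count_space_if_eq cong: if_cong)

lemma nn_integral_offspring_locs_sum_list:
  "(\<integral>\<^sup>+ys. (\<Sum>y\<leftarrow>ys. f y) \<partial>offspring_locs d p z) = mean_off d z * (\<integral>\<^sup>+y. f y \<partial>p z)"
  by (simp add: offspring_locs_def nn_integral_bind_pmf nn_integral_seq_pmf_sum_list sum_list_replicate
      nn_integral_multc mean_off_def ennreal_of_nat_eq_real_of_nat)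

lemma nn_integral_white_kids:
  "(\<integral>\<^sup>+M. of_nat (sum_mset (image_mset g M)) \<partial>white_kids d p f z)
     = mean_off d z * (\<integral>\<^sup>+y. (\<integral>\<^sup>+t. of_nat (g t) \<partial>f y) \<partial>p z)"
proof -
  have sum_mset_mset: "(of_nat (sum_mset (image_mset g (mset ts))) :: ennreal) = (\<Sum>t\<leftarrow>ts. of_nat (g t))" for ts
    by (induction ts) auto
  have "white_kids d p f z = bind_pmf (offspring_locs d p z) (\<lambda>ys. map_pmf mset (seq_pmf (map f ys)))"
    by (simp add: white_kids_def offspring_locs_def bind_assoc_pmf)
  then show ?thesis
    by (simp only: nn_integral_bind_pmf nn_integral_map_pmf sum_mset_mset nn_integral_seq_pmf_sum_list
        map_map o_def nn_integral_offspring_locs_sum_list)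
qed

definition hit_mean :: "('a \<Rightarrow> nat pmf) \<Rightarrow> ('a \<Rightarrow> 'a pmf) \<Rightarrow> 'a set \<Rightarrow> nat \<Rightarrow> 'a \<Rightarrow> ennreal" where
  "hit_mean d p B n z = (\<integral>\<^sup>+t. of_nat (hcount B t) \<partial>measure_pmf (bmc d p n z))"

lemma hit_mean_0: "hit_mean d p B 0 z = (if z \<in> B then 1 else 0)"
  by (simp add: hit_mean_def)

lemma hit_mean_Suc:
  "hit_mean d p B (Suc n) z = (if z \<in> B then 1 else mean_off d z * (\<integral>\<^sup>+y. hit_mean d p B n y \<partial>p z))"
  by (simp add: hit_mean_def nn_integral_white_kids[where g="hcount B"] del: of_nat_sum_mset)

lemma hit_mean_le_Suc: "hit_mean d p B n z \<le> hit_mean d p B (Suc n) z"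
proof (induction n arbitrary: z)
  case (Suc n)
  show ?case
    by (subst (1 2) hit_mean_Suc) (auto intro!: mult_left_mono nn_integral_mono Suc)
qed (simp add: hit_mean_0 hit_mean_Suc)

lemma incseq_hit_mean: "incseq (\<lambda>n. hit_mean d p B n z)"
  by (rule incseq_SucI) (rule hit_mean_le_Suc)

lemma hfun_eq_SUP_hit_mean: "hfun d p B z = (SUP n. hit_mean d p B n z)"
  by (simp add: hfun_def hit_mean_def ennreal_of_nat_eq_real_of_nat)

lemma hfun_in_B:
  assumes "z \<in> B"
  shows "hfun d p B z = 1"
proof -
  have "hit_mean d p B n z = 1" for n
    using assms by (cases n) (simp_all add: hit_mean_0 hit_mean_Suc)
  then show ?thesis
    by (simp add: hfun_eq_SUP_hit_mean)
qed

lemma SUP_Suc_incseq: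
  fixes f :: "nat \<Rightarrow> 'b::complete_lattice"
  assumes "incseq f"
  shows "(SUP n. f (Suc n)) = (SUP n. f n)"
  using assms by (intro antisym SUP_mono) (auto simp: incseq_Suc_iff)

lemma hfun_harmonic:
  assumes "z \<notin> B"
  shows "hfun d p B z = mean_off d z * (\<integral>\<^sup>+y. hfun d p B y \<partial>p z)"
proof -
  have incseq: "incseq (\<lambda>n y. hit_mean d p B n y)"
    by (rule incseq_SucI) (auto simp: le_fun_def hit_mean_le_Suc)
  have "hfun d p B z = (SUP n. hit_mean d p B (Suc n) z)"
    by (simp add: hfun_eq_SUP_hit_mean SUP_Suc_incseq[OF incseq_hit_mean])
  also have "\<dots> = mean_off d z * (SUP n. \<integral>\<^sup>+y. hit_mean d p B n y \<partial>p z)"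
    using assms by (simp add: hit_mean_Suc SUP_mult_left_ennreal)
  also have "\<dots> = mean_off d z * (\<integral>\<^sup>+y. hfun d p B y \<partial>p z)"
    by (simp add: nn_integral_monotone_convergence_SUP[OF incseq] hfun_eq_SUP_hit_mean)
  finally show ?thesis .
qed

lemma qpow_Suc:
  "qpow d p (Suc n) x y = (\<integral>\<^sup>+z. qpow d p n x z * qmat d p z y \<partial>count_space UNIV)"
  for x y :: "'a::countable"
  by (simp add: infsum_ennreal_eq_nn_integral)

declare qpow.simps(2) [simp del]

lemma nn_integral_qmat:
  "mean_off d z * (\<integral>\<^sup>+y. f y \<partial>measure_pmf (p z)) = (\<integral>\<^sup>+y. qmat d p z y * f y \<partial>count_space UNIV)"
  by (simp add: nn_integral_measure_pmf qmat_def mult.assoc flip: nn_integral_cmult)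

lemma qpow_Suc_left:
  "qpow d p (Suc n) x y = (\<integral>\<^sup>+w. qmat d p x w * qpow d p n w y \<partial>count_space UNIV)"
  for x y :: "'a::countable"
proof (induction n arbitrary: y)
  case 0
  show ?case
    by (simp add: qpow_Suc if_distrib[of "\<lambda>a. a * _"] if_distrib[of "\<lambda>a. _ * a"]
        nn_integral_count_space_if_eq cong: if_cong)
next
  case (Suc n)
  have "qpow d p (Suc (Suc n)) x y
      = (\<integral>\<^sup>+v. (\<integral>\<^sup>+w. qmat d p x w * qpow d p n w v * qmat d p v y \<partial>count_space UNIV) \<partial>count_space UNIV)"
    by (simp add: qpow_Suc[of _ _ "Suc n"] Suc nn_integral_multc[symmetric])
  also have "\<dots> = (\<integral>\<^sup>+w. (\<integral>\<^sup>+v. qmat d p x w * qpow d p n w v * qmat d p v y \<partial>count_space UNIV) \<partial>count_space UNIV)"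
    by (rule nn_integral_count_space_nn_integral[symmetric]) auto
  also have "\<dots> = (\<integral>\<^sup>+w. qmat d p x w * qpow d p (Suc n) w y \<partial>count_space UNIV)"
    by (simp add: qpow_Suc[of _ _ n] nn_integral_cmult[symmetric] mult.assoc)
  finally show ?case .
qed

lemma hit_mean_le_sum_qpow:
  fixes z :: "'a::countable"
  assumes "finite B"
  shows "hit_mean d p B n z \<le> (\<Sum>y\<in>B. \<Sum>k\<le>n. qpow d p k z y)"
proof (induction n arbitrary: z)
  case 0
  show ?case using assms by (auto simp: hit_mean_0)
next
  case (Suc n)
  show ?case
  proof (cases "z \<in> B")
    case True
    have "(1::ennreal) = qpow d p 0 z z" by simp
    also have "\<dots> \<le> (\<Sum>k\<le>Suc n. qpow d p k z z)"
      by (rule member_le_sum) auto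
    also have "\<dots> \<le> (\<Sum>y\<in>B. \<Sum>k\<le>Suc n. qpow d p k z y)"
      by (rule member_le_sum) (use True assms in auto)
    finally show ?thesis using True by (simp add: hit_mean_Suc)
  next
    case False
    have "hit_mean d p B (Suc n) z = (\<integral>\<^sup>+w. qmat d p z w * hit_mean d p B n w \<partial>count_space UNIV)"
      using False by (simp add: hit_mean_Suc nn_integral_qmat)
    also have "\<dots> \<le> (\<integral>\<^sup>+w. qmat d p z w * (\<Sum>y\<in>B. \<Sum>k\<le>n. qpow d p k w y) \<partial>count_space UNIV)"
      by (intro nn_integral_mono mult_left_mono Suc) auto
    also have "\<dots> = (\<Sum>y\<in>B. \<Sum>k\<le>n. qpow d p (Suc k) z y)"
      by (simp add: sum_distrib_left nn_integral_sum qpow_Suc_left)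
    also have "\<dots> \<le> (\<Sum>y\<in>B. \<Sum>k\<le>Suc n. qpow d p k z y)"
      by (intro sum_mono) (simp add: sum.atMost_Suc_shift del: sum.atMost_Suc)
    finally show ?thesis .
  qed
qed

lemma hfun_less_top:
  fixes z :: "'a::countable"
  assumes "\<forall>u v. green d p u v < \<top>" and "finite B"
  shows "hfun d p B z < \<top>"
proof -
  have "(\<Sum>k\<le>n. qpow d p k z y) \<le> green d p z y" for n y
    unfolding green_def by (rule sum_le_suminf[OF summableI]) auto
  then have "hit_mean d p B n z \<le> (\<Sum>y\<in>B. green d p z y)" for n
    using hit_mean_le_sum_qpow[OF assms(2)] by (meson order_trans sum_mono)
  then have "hfun d p B z \<le> (\<Sum>y\<in>B. green d p z y)"
    unfolding hfun_eq_SUP_hit_mean by (intro SUP_least)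
  also have "\<dots> < \<top>"
    using assms by (simp add: less_top)
  finally show ?thesis .
qed

text \<open>Off B, h(v) \<ge> q(v,w) h(w), so positivity of h propagates backwards along Q-paths.\<close>
lemma hfun_pos_if_qpow_pos:
  fixes z :: "'a::countable"
  shows "qpow d p k z w > 0 \<Longrightarrow> hfun d p B w > 0 \<Longrightarrow> hfun d p B z > 0"
proof (induction k arbitrary: w)
  case 0
  then show ?case by (auto split: if_splits)
next
  case (Suc k)
  have "\<exists>v. qpow d p k z v * qmat d p v w \<noteq> 0"
    using Suc.prems(1) by (rule_tac ccontr) (simp add: qpow_Suc del: mult_eq_0_iff)
  then obtain v where v_reach: "qpow d p k z v > 0" and v_edge: "qmat d p v w > 0"
    by (auto simp: zero_less_iff_neq_zero)
  have "hfun d p B v > 0"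
  proof (cases "v \<in> B")
    case False
    have "0 < qmat d p v w * hfun d p B w"
      using v_edge Suc.prems(2) by (simp add: ennreal_zero_less_mult_iff)
    also have "\<dots> \<le> (\<integral>\<^sup>+u. qmat d p v u * hfun d p B u \<partial>count_space UNIV)"
      by (rule nn_integral_ge_point) simp
    also have "\<dots> = hfun d p B v"
      using False by (simp add: hfun_harmonic nn_integral_qmat)
    finally show ?thesis .
  qed (simp add: hfun_in_B)
  then show ?case using Suc.IH v_reach by blast
qed

lemma hfun_pos:
  fixes z :: "'a::countable"
  assumes "norming_region d p B"
  shows "hfun d p B z > 0"
proof -
  from assms have "0 < (\<Sum>y\<in>B. green d p z y)"
    by (simp add: norming_region_def)
  then obtain y where "y \<in> B" and "green d p z y \<noteq> 0"
    by (metis less_irrefl sum.neutral)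
  moreover have "green d p z y = 0" if "\<forall>k. qpow d p k z y = 0"
    using that by (simp add: green_def)
  ultimately obtain k where "qpow d p k z y > 0"
    by (auto simp: zero_less_iff_neq_zero)
  moreover have "hfun d p B y > 0"
    using \<open>y \<in> B\<close> by (simp add: hfun_in_B)
  ultimately show ?thesis
    by (rule hfun_pos_if_qpow_pos)
qed

section \<open>The h-transformed chain and the biased offspring law\<close>

locale norming_setting =
  fixes d :: "'a::countable \<Rightarrow> nat pmf" and p :: "'a \<Rightarrow> 'a pmf" and B :: "'a set"
  assumes green_finite: "\<forall>u v. green d p u v < \<top>"
    and norming: "norming_region d p B"
begin

abbreviation h :: "'a \<Rightarrow> ennreal" where
  "h \<equiv> hfun d p B"

lemma finite_B: "finite B"
  using norming by (simp add: norming_region_def)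

lemma h_pos: "0 < h z"
  using hfun_pos[OF norming] .

lemma h_less_top: "h z < \<top>"
  using hfun_less_top[OF green_finite finite_B] .

lemma h_divide_self: "h z / h z = 1"
  using h_pos[of z] h_less_top[of z] by (simp add: ennreal_divide_self)

lemma nn_integral_h_pos: "0 < (\<integral>\<^sup>+y. h y \<partial>p z)"
  using h_pos by (simp add: zero_less_iff_neq_zero nn_integral_0_iff_AE)

lemma mean_off_pos: "z \<notin> B \<Longrightarrow> 0 < mean_off d z"
  using hfun_harmonic[of z B d p] h_pos[of z] by (auto simp: zero_less_iff_neq_zero)

lemma mean_off_less_top: "z \<notin> B \<Longrightarrow> mean_off d z < \<top>"
  using hfun_harmonic[of z B d p] h_less_top[of z] nn_integral_h_pos[of z]
  by (auto simp: ennreal_mult_less_top)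

lemma ph_less_top: "ph d p B z y < \<top>"
proof (cases "z \<in> B")
  case False
  then have "qmat d p z y * h y < \<top>"
    using mean_off_less_top h_less_top by (simp add: qmat_def ennreal_mult_less_top)
  then show ?thesis
    using False h_pos[of z] by (auto simp: ph_def ennreal_divide_eq_top_iff simp flip: less_top)
qed (simp add: ph_def)

lemma nn_integral_ph: "(\<integral>\<^sup>+y. ph d p B z y \<partial>count_space UNIV) = (if z \<in> B then 0 else 1)"
proof (cases "z \<in> B")
  case False
  have "(\<integral>\<^sup>+y. ph d p B z y \<partial>count_space UNIV) = (\<integral>\<^sup>+y. qmat d p z y * h y \<partial>count_space UNIV) / h z"
    using False by (simp add: ph_def divide_ennreal_def nn_integral_multc)
  also have "\<dots> = 1"
    by (simp only: nn_integral_qmat[symmetric] hfun_harmonic[OF False, symmetric] h_divide_self)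
  finally show ?thesis using False by simp
qed (simp add: ph_def)

lemma pmf_hkernel_Some:
  "pmf (hkernel d p B (Some z)) (Some y) = enn2real (ph d p B z y)"
  "pmf (hkernel d p B (Some z)) None = enn2real (1 - (\<integral>\<^sup>+y. ph d p B z y \<partial>count_space UNIV))"
proof -
  let ?c = "\<integral>\<^sup>+y. ph d p B z y \<partial>count_space UNIV"
  define f where "f = (\<lambda>s. case s of Some y \<Rightarrow> enn2real (ph d p B z y) | None \<Rightarrow> enn2real (1 - ?c))"
  have hkernel_eq: "hkernel d p B (Some z) = embed_pmf f"
    unfolding hkernel_def f_def infsum_ennreal_eq_nn_integral by simp
  have "?c \<le> 1"
    by (simp add: nn_integral_ph)
  then have "(\<integral>\<^sup>+s. ennreal (f s) \<partial>count_space UNIV) = (1 - ?c) + ?c"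
    using ph_less_top by (simp add: nn_integral_count_space_option f_def diff_less_top_ennreal add.commute)
  also have "\<dots> = 1"
    using \<open>?c \<le> 1\<close> by (simp add: diff_add_cancel_ennreal)
  finally have "pmf (embed_pmf f) s = f s" for s
    by (intro pmf_embed_pmf) (auto simp: f_def split: option.split)
  then show "pmf (hkernel d p B (Some z)) (Some y) = enn2real (ph d p B z y)"
    and "pmf (hkernel d p B (Some z)) None = enn2real (1 - ?c)"
    by (simp_all add: hkernel_eq f_def)
qed

lemma hkernel_in_B:
  assumes "z \<in> B"
  shows "hkernel d p B (Some z) = return_pmf None"
proof (intro pmf_eqI)
  fix s
  show "pmf (hkernel d p B (Some z)) s = pmf (return_pmf None) s"
    using assms by (cases s) (simp_all add: pmf_hkernel_Some nn_integral_ph ph_def)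
qed

definition htrans :: "'a \<Rightarrow> 'a pmf" where
  "htrans z = embed_pmf (\<lambda>y. enn2real (ph d p B z y))"

lemma pmf_htrans: "z \<notin> B \<Longrightarrow> pmf (htrans z) y = enn2real (ph d p B z y)"
  unfolding htrans_def using ph_less_top nn_integral_ph[of z]
  by (subst pmf_embed_pmf) (auto simp: less_top)

lemma ennreal_pmf_htrans: "z \<notin> B \<Longrightarrow> ennreal (pmf (htrans z) y) = ph d p B z y"
  using ph_less_top by (simp add: pmf_htrans less_top)

lemma hkernel_notin_B: "z \<notin> B \<Longrightarrow> hkernel d p B (Some z) = map_pmf Some (htrans z)"
proof (intro pmf_eqI)
  fix s
  assume "z \<notin> B"
  then show "pmf (hkernel d p B (Some z)) s = pmf (map_pmf Some (htrans z)) s"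
    by (cases s) (auto simp: pmf_hkernel_Some nn_integral_ph pmf_htrans pmf_map_inj' intro!: pmf_map_outside)
qed

lemma hpath_Suc_notin_B:
  "z \<notin> B \<Longrightarrow> hpath d p B (Suc n) (Some z)
     = bind_pmf (htrans z) (\<lambda>y. map_pmf (Cons (Some y)) (hpath d p B n (Some y)))"
  by (simp add: hkernel_notin_B map_pmf_def bind_assoc_pmf bind_return_pmf)

lemma emeasure_hpath_hits_B:
  "emeasure (measure_pmf (hpath d p B n (Some z))) {ws. \<exists>y\<in>B. Some y \<in> set (Some z # ws)}
     = hit_mean d p B n z / h z"
proof (induction n arbitrary: z)
  case 0
  show ?case
    by (cases "z \<in> B") (auto simp: hit_mean_0 hfun_in_B)
next
  case (Suc n)
  let ?hits = "\<lambda>z. {ws. \<exists>y\<in>B. Some y \<in> set (Some z # ws)}"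
  show ?case
  proof (cases "z \<in> B")
    case True
    then have "?hits z = UNIV" by auto
    then show ?thesis
      using True by (simp add: hit_mean_Suc hfun_in_B measure_pmf.emeasure_space_1[simplified])
  next
    case False
    then have "Cons (Some y) -` ?hits z = ?hits y" for y
      by auto
    then have "emeasure (measure_pmf (hpath d p B (Suc n) (Some z))) (?hits z)
        = (\<integral>\<^sup>+y. hit_mean d p B n y / h y \<partial>htrans z)"
      by (simp only: hpath_Suc_notin_B[OF False] emeasure_bind_pmf emeasure_map_pmf Suc.IH)
    also have "\<dots> = (\<integral>\<^sup>+y. ph d p B z y * (hit_mean d p B n y / h y) \<partial>count_space UNIV)"
      by (simp add: nn_integral_measure_pmf ennreal_pmf_htrans[OF False])
    also have "\<dots> = (\<integral>\<^sup>+y. qmat d p z y * hit_mean d p B n y / h z \<partial>count_space UNIV)"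
      using False h_pos h_less_top by (simp add: ph_def ennreal_mult_divide_mult_divide_cancel)
    also have "\<dots> = (\<integral>\<^sup>+y. qmat d p z y * hit_mean d p B n y \<partial>count_space UNIV) / h z"
      by (simp add: divide_ennreal_def nn_integral_multc)
    also have "\<dots> = hit_mean d p B (Suc n) z / h z"
      using False by (simp add: hit_mean_Suc nn_integral_qmat)
    finally show ?thesis .
  qed
qed

lemma hpath_hits_B_tendsto_1:
  "(\<lambda>n. measure_pmf.prob (hpath d p B n (Some z)) {ws. \<exists>y\<in>B. Some y \<in> set (Some z # ws)})
     \<longlonglongrightarrow> 1"
proof -
  have "(\<lambda>n. hit_mean d p B n z) \<longlonglongrightarrow> h z"
    unfolding hfun_eq_SUP_hit_mean by (rule LIMSEQ_SUP[OF incseq_hit_mean])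
  then have "(\<lambda>n. hit_mean d p B n z / h z) \<longlonglongrightarrow> h z / h z"
    using h_pos[of z] unfolding divide_ennreal_def
    by (subst (1 2) mult.commute) (intro ennreal_tendsto_cmult, auto simp flip: less_top)
  then have "(\<lambda>n. emeasure (measure_pmf (hpath d p B n (Some z)))
      {ws. \<exists>y\<in>B. Some y \<in> set (Some z # ws)}) \<longlonglongrightarrow> ennreal 1"
    by (simp only: emeasure_hpath_hits_B h_divide_self ennreal_1)
  from tendsto_enn2real[OF this] show ?thesis
    by (simp add: measure_def)
qed

lemma ennreal_hr: "ennreal (enn2real (h z)) = h z"
  using h_less_top[of z] by simp

lemma hr_pos: "0 < enn2real (h z)"
  using h_pos[of z] h_less_top[of z] by (simp add: enn2real_positive_iff)

lemma ennreal_mr: "z \<notin> B \<Longrightarrow> ennreal (enn2real (mean_off d z)) = mean_off d z"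
  using mean_off_less_top by simp

lemma mr_pos: "z \<notin> B \<Longrightarrow> 0 < enn2real (mean_off d z)"
  using mean_off_pos mean_off_less_top by (simp add: enn2real_positive_iff)

lemma pmf_htrans_eq:
  assumes "z \<notin> B"
  shows "pmf (htrans z) y
    = enn2real (mean_off d z) * pmf (p z) y * enn2real (h y) / enn2real (h z)"
proof -
  have "ph d p B z y = ennreal (enn2real (mean_off d z)) * ennreal (pmf (p z) y)
      * ennreal (enn2real (h y)) / ennreal (enn2real (h z))"
    using assms by (simp add: ph_def qmat_def ennreal_mr ennreal_hr)
  also have "\<dots> = ennreal (enn2real (mean_off d z) * pmf (p z) y * enn2real (h y) / enn2real (h z))"
    using hr_pos[of z] by (simp add: ennreal_mult_divide ennreal_mult)
  finally show ?thesis
    using assms by (simp add: pmf_htrans)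
qed

lemma pmf_dsb:
  assumes "z \<notin> B"
  shows "pmf (dsb d z) k = real k * pmf (d z) k / enn2real (mean_off d z)"
proof -
  let ?m = "enn2real (mean_off d z)"
  have "(\<integral>\<^sup>+k. ennreal (real k * pmf (d z) k / ?m) \<partial>count_space UNIV)
      = (\<integral>\<^sup>+k. ennreal (real k) * ennreal (pmf (d z) k) \<partial>count_space UNIV) / mean_off d z"
    using mr_pos[OF assms]
    by (simp add: divide_ennreal ennreal_mult'' ennreal_mr[OF assms] divide_ennreal_def nn_integral_multc
        flip: divide_ennreal)
  also have "\<dots> = 1"
    using mean_off_pos[OF assms] mean_off_less_top[OF assms]
    by (simp add: mean_off_def nn_integral_measure_pmf mult.commute ennreal_divide_self)
  finally show ?thesis
    unfolding dsb_def using mr_pos[OF assms] by (subst pmf_embed_pmf) auto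
qed

definition biased_weight :: "'a \<Rightarrow> 'a list \<Rightarrow> nat \<Rightarrow> real" where
  "biased_weight z ys k = (if k < length ys
     then pmf (d z) (length ys) * (\<Prod>y\<leftarrow>ys. pmf (p z) y) * enn2real (h (ys ! k)) / enn2real (h z)
     else 0)"

lemma biased_weight_nonneg: "0 \<le> biased_weight z ys k"
  by (auto simp: biased_weight_def intro!: divide_nonneg_pos mult_nonneg_nonneg hr_pos)

lemma ennreal_biased_weight:
  assumes "k < length ys"
  shows "ennreal (biased_weight z ys k) = ennreal (pmf (offspring_locs d p z) ys) * h (ys ! k) / h z"
  using assms hr_pos[of z]
  by (simp add: biased_weight_def ennreal_mult_divide ennreal_mult ennreal_hr ennreal_pmf_offspring_locs)

lemma nn_integral_biased_weight:
  assumes "z \<notin> B"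
  shows "(\<integral>\<^sup>+x. ennreal (biased_weight z (fst x) (snd x)) \<partial>count_space UNIV) = 1"
proof -
  have "(\<integral>\<^sup>+k. ennreal (biased_weight z ys k) \<partial>count_space UNIV)
      = ennreal (pmf (offspring_locs d p z) ys) * (\<Sum>y\<leftarrow>ys. h y) / h z" for ys
  proof -
    have "(\<integral>\<^sup>+k. ennreal (biased_weight z ys k) \<partial>count_space UNIV)
        = (\<Sum>k<length ys. ennreal (biased_weight z ys k))"
      by (rule nn_integral_count_space') (auto simp: biased_weight_def)
    also have "\<dots> = (\<Sum>k<length ys. ennreal (pmf (offspring_locs d p z) ys) * h (ys ! k) / h z)"
      by (simp add: ennreal_biased_weight)
    finally show ?thesis
      by (simp add: divide_ennreal_def sum_distrib_left sum_distrib_right sum_list_sum_nth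
          atLeast0LessThan mult.assoc)
  qed
  then have "(\<integral>\<^sup>+x. ennreal (biased_weight z (fst x) (snd x)) \<partial>count_space UNIV)
      = (\<integral>\<^sup>+ys. (\<Sum>y\<leftarrow>ys. h y) \<partial>offspring_locs d p z) / h z"
    by (simp add: nn_integral_count_space_prod nn_integral_measure_pmf divide_ennreal_def
        nn_integral_multc)
  also have "\<dots> = 1"
    using assms by (simp add: nn_integral_offspring_locs_sum_list h_divide_self flip: hfun_harmonic)
  finally show ?thesis .
qed

lemma pmf_biased_off:
  assumes "z \<notin> B"
  shows "pmf (biased_off d p B z) (ys, k) = biased_weight z ys k"
proof -
  have hr_sum_pos: "0 < (\<Sum>y\<leftarrow>ys. enn2real (h y))" if "k < length ys" for ys and k :: nat
  proof -
    have "enn2real (h (ys ! k)) \<le> (\<Sum>y\<leftarrow>ys. enn2real (h y))"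
      using that hr_pos by (intro member_le_sum_list) (auto intro: less_imp_le)
    then show ?thesis
      using hr_pos[of "ys ! k"] by linarith
  qed
  have "biased_off d p B z = embed_pmf (\<lambda>x. biased_weight z (fst x) (snd x))"
    unfolding biased_off_def
  proof (intro arg_cong[where f=embed_pmf] ext, clarify)
    fix ys k
    show "(let h = \<lambda>y. enn2real (h y); S = sum_list (map h ys) in
        if k < length ys then 1 / h z * pmf (d z) (length ys) * prod_list (map (pmf (p z)) ys) * S * (h (ys ! k) / S)
        else 0) = biased_weight z (fst (ys, k)) (snd (ys, k))"
      using hr_sum_pos[of k ys] by (cases "k < length ys") (simp_all add: biased_weight_def Let_def)
  qed
  then show ?thesis
    using biased_weight_nonneg nn_integral_biased_weight[OF assms] by (simp add: pmf_embed_pmf)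
qed

lemma set_pmf_biased_off: "z \<notin> B \<Longrightarrow> (ys, k) \<in> set_pmf (biased_off d p B z) \<Longrightarrow> k < length ys"
  by (auto simp: set_pmf_iff pmf_biased_off biased_weight_def split: if_splits)

text \<open>Off B, dsb charges no mass at 0, so the truncated subtraction k - 1 is harmless.\<close>
definition sibling_locs :: "'a \<Rightarrow> 'a list pmf" where
  "sibling_locs z = bind_pmf (dsb d z) (\<lambda>k. seq_pmf (replicate (k - 1) (p z)))"

lemma pmf_sibling_locs:
  assumes "z \<notin> B"
  shows "pmf (sibling_locs z) ws = pmf (dsb d z) (Suc (length ws)) * (\<Prod>w\<leftarrow>ws. pmf (p z) w)"
proof -
  have "ennreal (pmf (sibling_locs z) ws)
      = (\<integral>\<^sup>+k. ennreal (pmf (dsb d z) k) * ennreal (if length ws = k - 1 then \<Prod>w\<leftarrow>ws. pmf (p z) w else 0)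
          \<partial>count_space UNIV)"
    by (simp add: sibling_locs_def ennreal_pmf_bind nn_integral_measure_pmf pmf_seq_pmf_replicate)
  also have "\<dots> = ennreal (pmf (dsb d z) (Suc (length ws))) * ennreal (\<Prod>w\<leftarrow>ws. pmf (p z) w)"
    using assms by (subst nn_integral_count_space'[of "{Suc (length ws)}"])
      (auto simp: pmf_dsb)
  also have "\<dots> = ennreal (pmf (dsb d z) (Suc (length ws)) * (\<Prod>w\<leftarrow>ws. pmf (p z) w))"
    by (simp add: ennreal_mult)
  finally show ?thesis
    by simp
qed

lemma biased_weight_insert_at:
  assumes "k \<le> length ws"
  shows "biased_weight z (insert_at k y ws) k
    = pmf (d z) (Suc (length ws)) * pmf (p z) y * (\<Prod>w\<leftarrow>ws. pmf (p z) w) * enn2real (h y) / enn2real (h z)"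
proof -
  have "k < length (insert_at k y ws)" "insert_at k y ws ! k = y"
    using assms nth_remove_at_eq_iff[of k "insert_at k y ws" y ws] by (simp_all add: length_insert_at)
  then show ?thesis
    using assms by (simp add: biased_weight_def length_insert_at prod_list_insert_at mult.assoc)
qed

lemma map_pmf_biased_off:
  assumes "z \<notin> B"
  shows "map_pmf (\<lambda>(ys, k). (ys ! k, remove_at k ys)) (biased_off d p B z)
    = pair_pmf (htrans z) (sibling_locs z)"
proof -
  have "pmf (map_pmf (\<lambda>(ys, k). (ys ! k, remove_at k ys)) (biased_off d p B z)) (y, ws)
      = pmf (pair_pmf (htrans z) (sibling_locs z)) (y, ws)" for y ws
  proof -
    let ?L = "length ws" and ?M = "biased_off d p B z"
      and ?g = "\<lambda>(ys :: 'a list, k :: nat). (ys ! k, remove_at k ys)"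
    let ?S = "(\<lambda>k. (insert_at k y ws, k)) ` {..?L}"
    have "?S \<subseteq> ?g -` {(y, ws)}"
      using nth_remove_at_eq_iff[of _ "insert_at _ y ws" y ws] by (auto simp: length_insert_at)
    moreover have "?g -` {(y, ws)} \<inter> set_pmf ?M \<subseteq> ?S"
    proof
      fix x
      assume x: "x \<in> ?g -` {(y, ws)} \<inter> set_pmf ?M"
      obtain ys k where x_eq: "x = (ys, k)"
        by (cases x)
      have "k < length ys"
        using x set_pmf_biased_off[OF assms] by (auto simp: x_eq)
      then show "x \<in> ?S"
        using x nth_remove_at_eq_iff[of k ys y ws] by (auto simp: x_eq)
    qed
    ultimately have preimage: "?g -` {(y, ws)} \<inter> set_pmf ?M = ?S \<inter> set_pmf ?M"
      by blast
    have "pmf (map_pmf ?g ?M) (y, ws) = measure ?M (?g -` {(y, ws)} \<inter> set_pmf ?M)"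
      by (simp only: pmf_map measure_Int_set_pmf)
    also have "\<dots> = measure ?M ?S"
      by (simp only: preimage measure_Int_set_pmf)
    also have "\<dots> = (\<Sum>k\<le>?L. biased_weight z (insert_at k y ws) k)"
      by (simp add: measure_measure_pmf_finite sum.reindex inj_on_def pmf_biased_off[OF assms])
    also have "\<dots> = real (Suc ?L) * pmf (d z) (Suc ?L) * pmf (p z) y * (\<Prod>w\<leftarrow>ws. pmf (p z) w)
        * enn2real (h y) / enn2real (h z)"
      by (simp add: biased_weight_insert_at)
    also have "\<dots> = pmf (pair_pmf (htrans z) (sibling_locs z)) (y, ws)"
      using mr_pos[OF assms] by (simp add: pmf_pair pmf_htrans_eq[OF assms] pmf_sibling_locs[OF assms]
          pmf_dsb[OF assms])
    finally show ?thesis .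
  qed
  then show ?thesis
    by (intro pmf_eqI) auto
qed

lemma bind_hpath_deco: "bind_pmf (hpath d p B n (Some z)) (deco d p B n z) = bbmc d p B n z"
proof (induction n arbitrary: z)
  case 0
  then show ?case by (simp add: bind_return_pmf)
next
  case (Suc n)
  show ?case
  proof (cases "z \<in> B")
    case True
    then show ?thesis
      by (simp add: hkernel_in_B bind_return_pmf bind_map_pmf)
  next
    case False
    define W where "W = (\<lambda>t ws. map_pmf (\<lambda>ts. UNode (z, Blue) (mset ts + {#t#})) (seq_pmf (map (bmc d p n) ws)))"
    have deco_Suc: "deco d p B (Suc n) z (Some y # ws)
        = bind_pmf (deco d p B n y ws) (\<lambda>t. bind_pmf (sibling_locs z) (W t))" for y ws
      using False by (simp add: sibling_locs_def bind_map_pmf bind_assoc_pmf W_def)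
    have "bind_pmf (hpath d p B (Suc n) (Some z)) (deco d p B (Suc n) z)
        = bind_pmf (htrans z) (\<lambda>y. bind_pmf (bind_pmf (hpath d p B n (Some y)) (deco d p B n y))
            (\<lambda>t. bind_pmf (sibling_locs z) (W t)))"
      by (simp only: hpath_Suc_notin_B[OF False] bind_map_pmf deco_Suc bind_assoc_pmf)
    also have "\<dots> = bind_pmf (htrans z) (\<lambda>y. bind_pmf (bbmc d p B n y) (\<lambda>t. bind_pmf (sibling_locs z) (W t)))"
      by (simp only: Suc.IH)
    also have "\<dots> = bind_pmf (pair_pmf (htrans z) (sibling_locs z))
        (\<lambda>(y, ws). bind_pmf (bbmc d p B n y) (\<lambda>t. W t ws))"
      by (simp add: pair_pmf_def bind_assoc_pmf bind_return_pmf bind_commute_pmf[of "bbmc d p B n _"])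
    also have "\<dots> = bind_pmf (biased_off d p B z) (\<lambda>(ys, k). bind_pmf (bbmc d p B n (ys ! k))
        (\<lambda>t. W t (remove_at k ys)))"
      by (simp add: map_pmf_biased_off[OF False, symmetric] bind_map_pmf case_prod_unfold)
    also have "\<dots> = bbmc d p B (Suc n) z"
    proof -
      have "bind_pmf (bbmc d p B n (ys ! k)) (\<lambda>t. W t (remove_at k ys))
          = map_pmf (\<lambda>ts. UNode (z, Blue) (mset ts))
              (seq_pmf (map (\<lambda>i. if i = k then bbmc d p B n (ys ! i) else bmc d p n (ys ! i)) [0..<length ys]))"
        if "k < length ys" for ys k
        using arg_cong[OF map_pmf_mset_seq_pmf_if_nth[OF that], of "map_pmf (UNode (z, Blue))"]
        by (simp add: W_def map_bind_pmf pmf.map_comp o_def)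
      then show ?thesis
        using False set_pmf_biased_off[OF False] by (auto intro!: bind_pmf_cong)
    qed
    finally show ?thesis .
  qed
qed

end

theorem mainTheorem3:
  fixes d :: "'a::countable \<Rightarrow> nat pmf" and p :: "'a \<Rightarrow> 'a pmf"
    and B :: "'a set" and x :: 'a
  assumes green_finite: "\<forall>u v. green d p u v < \<top>"
    and norming: "norming_region d p B"
  shows "(\<forall>n. bind_pmf (hpath d p B n (Some x)) (\<lambda>ws. deco d p B n x ws) = bbmc d p B n x)
    \<and> (\<lambda>n. measure_pmf.prob (hpath d p B n (Some x))
              {ws. \<exists>y\<in>B. Some y \<in> set (Some x # ws)}) \<longlonglongrightarrow> 1"
proof -
  interpret norming_setting d p B
    using green_finite norming by unfold_locales
  show ?thesis
    using bind_hpath_deco hpath_hits_B_tendsto_1 by simp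
qed

end
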